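(* HazardPointersPOP, as described in the context, is robust: the number of retired but not yet freed nodes is bounded, regardless of delayed or stalled threads.
   Context: Setting: an asynchronous shared-memory system with a fixed number $N$ of threads operating on a linked concurrent data structure; each unlinked node is retired by exactly one thread. HazardPointersPOP: each thread has at most $H$ local reservation slots, a row of a shared reservation array, a shared counter publishCounter and a private retire list. Reading a node stores its pointer into a local slot (validated by re-reading the source pointer) without publishing; local slots are cleared at the end of each operation. When a thread's retire list reaches a threshold $r$ it records all publishCounters, sends a POSIX signal to every other thread (whose handler copies its local reservations into its shared slots and increments its publishCounter), waits until all other publishCounters have increased, then frees every node in its retire list that is not among the published reservations. Assumption: after being signalled, a thread publishes its reservations within bounded time. *)

theory Defs
  imports Main
begin

text \<open>Abstract interleaving model of HazardPointersPOP for N threads (indices 0..N-1),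
  at most H local reservation slots per thread, and retire threshold r.  The data structure itself is abstracted away:
  a thread may reserve (read) any node, which only over-approximates the behaviours.\<close>

datatype rmode = Idle | Waiting "nat \<Rightarrow> nat"
  \<comment> \<open>Waiting snap: reclaiming, waiting for all other publishCounters to exceed snap\<close>

record 'n hpstate =
  local   :: "nat \<Rightarrow> 'n set"    \<comment> \<open>local (unpublished) reservation slots\<close>
  shared  :: "nat \<Rightarrow> 'n set"
  pcnt    :: "nat \<Rightarrow> nat"
  sig     :: "nat \<Rightarrow> bool"      \<comment> \<open>pending POSIX signal\<close>
  rlist   :: "nat \<Rightarrow> 'n set"
  mode    :: "nat \<Rightarrow> rmode"
  retired :: "'n set"
  freed   :: "'n set"

definition hp_init :: "'n hpstate" where
  "hp_init = \<lparr>local = (\<lambda>_. {}), shared = (\<lambda>_. {}), pcnt = (\<lambda>_. 0), sig = (\<lambda>_. False),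
              rlist = (\<lambda>_. {}), mode = (\<lambda>_. Idle), retired = {}, freed = {}\<rparr>"

inductive hp_reach :: "nat \<Rightarrow> nat \<Rightarrow> nat \<Rightarrow> 'n hpstate \<Rightarrow> bool" for N H r where
  init: "hp_reach N H r hp_init"
| read: "\<lbrakk> hp_reach N H r s; t < N; mode s t = Idle;
          x \<in> L; L \<subseteq> insert x (local s t); finite L; card L \<le> H \<rbrakk>
        \<Longrightarrow> hp_reach N H r (s\<lparr>local := (local s)(t := L)\<rparr>)"
| end_op: "\<lbrakk> hp_reach N H r s; t < N; mode s t = Idle \<rbrakk>
        \<Longrightarrow> hp_reach N H r (s\<lparr>local := (local s)(t := {})\<rparr>)"
| retire: "\<lbrakk> hp_reach N H r s; t < N; mode s t = Idle; x \<notin> retired s;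
            R = insert x (rlist s t) \<rbrakk>
        \<Longrightarrow> hp_reach N H r (s\<lparr>rlist := (rlist s)(t := R),
                               retired := insert x (retired s),
                               mode := (if r \<le> card R then (mode s)(t := Waiting (pcnt s))
                                        else mode s),
                               sig := (if r \<le> card R
                                       then (\<lambda>u. if u < N \<and> u \<noteq> t then True else sig s u)
                                       else sig s)\<rparr>)"
| handler: "\<lbrakk> hp_reach N H r s; t < N; sig s t \<rbrakk>
        \<Longrightarrow> hp_reach N H r (s\<lparr>shared := (shared s)(t := local s t),
                               pcnt := (pcnt s)(t := Suc (pcnt s t)),
                               sig := (sig s)(t := False)\<rparr>)"
| reclaim: "\<lbrakk> hp_reach N H r s; t < N; mode s t = Waiting snap;
             \<forall>u<N. u \<noteq> t \<longrightarrow> snap u < pcnt s u;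
             P = (\<Union>u\<in>{u. u < N}. shared s u) \<rbrakk>
        \<Longrightarrow> hp_reach N H r (s\<lparr>rlist := (rlist s)(t := rlist s t \<inter> P),
                               freed := freed s \<union> (rlist s t - P),
                               mode := (mode s)(t := Idle)\<rparr>)"

end

theory Submission
  imports Defs
begin

text \<open>A node that is retired but not yet freed sits in the retire list of some thread, so it
  suffices to bound every retire list.  A list only grows while its owner is idle, and the owner
  starts reclaiming as soon as it holds r nodes; a completed reclamation keeps only nodes that
  are published, and there are at most N \<cdot> H of those, since every shared row is a copy of a
  local reservation set of size at most H.  Hence no retire list ever exceeds max r (N H + 1),
  whatever the other threads do in the meantime.\<close>

lemma card_UN_le_card_mult:
  assumes "finite I" and "\<And>i. i \<in> I \<Longrightarrow> card (A i) \<le> k"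
  shows "card (\<Union>i\<in>I. A i) \<le> card I * k"
proof -
  have "card (\<Union>i\<in>I. A i) \<le> (\<Sum>i\<in>I. card (A i))"
    using assms(1) by (rule card_UN_le)
  also have "\<dots> \<le> card I * k"
    using sum_bounded_above[of I "\<lambda>i. card (A i)" k] assms(2) by simp
  finally show ?thesis .
qed

lemma hp_reach_local_card:
  assumes "hp_reach N H r s"
  shows "finite (local s t) \<and> card (local s t) \<le> H"
  using assms by induction (simp_all add: hp_init_def)

lemma hp_reach_shared_card:
  assumes "hp_reach N H r s"
  shows "finite (shared s t) \<and> card (shared s t) \<le> H"
  using assms
proof induction
  case (handler s u)
  then show ?case
    using hp_reach_local_card[of N H r s u] by auto
qed (auto simp: hp_init_def)

lemma hp_reach_published_card:
  assumes "hp_reach N H r s"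
  shows "finite (\<Union>u\<in>{u. u < N}. shared s u) \<and> card (\<Union>u\<in>{u. u < N}. shared s u) \<le> N * H"
  using card_UN_le_card_mult[of "{u. u < N}" "shared s" H] hp_reach_shared_card[OF assms]
  by auto

definition retire_list_bound :: "nat \<Rightarrow> nat \<Rightarrow> nat \<Rightarrow> nat" where
  "retire_list_bound N H r = max r (N * H + 1)"

lemma hp_reach_rlist_card:
  assumes "hp_reach N H r s"
  shows "finite (rlist s t) \<and> card (rlist s t) \<le> retire_list_bound N H r \<and>
         (mode s t = Idle \<longrightarrow> card (rlist s t) < retire_list_bound N H r)"
  using assms
proof induction
  case (retire s u x R)
  then show ?case
    by (auto simp: card_insert_if retire_list_bound_def)
next
  case (reclaim s u snap P)
  have "finite P" and "card P \<le> N * H"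
    using reclaim.hyps hp_reach_published_card by blast+
  then have "card (rlist s u \<inter> P) < retire_list_bound N H r"
    using card_mono[of P "rlist s u \<inter> P"] by (simp add: retire_list_bound_def)
  with reclaim.IH show ?case
    by (auto simp: retire_list_bound_def)
qed (auto simp: hp_init_def retire_list_bound_def)

lemma hp_reach_unfreed_subset:
  assumes "hp_reach N H r s"
  shows "retired s - freed s \<subseteq> (\<Union>t\<in>{t. t < N}. rlist s t)"
  using assms by induction (auto simp: hp_init_def)

theorem mainTheorem8:
  fixes N H r :: nat
  shows "\<exists>B::nat. \<forall>s :: 'n hpstate. hp_reach N H r s \<longrightarrow>
           finite (retired s - freed s) \<and> card (retired s - freed s) \<le> B"
proof (intro exI allI impI)
  fix s :: "'n hpstate"
  assume reach: "hp_reach N H r s"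
  let ?U = "\<Union>t\<in>{t. t < N}. rlist s t"
  have fin: "finite ?U"
    using hp_reach_rlist_card[OF reach] by auto
  have card_U: "card ?U \<le> N * retire_list_bound N H r"
    using card_UN_le_card_mult[of "{t. t < N}" "rlist s"] hp_reach_rlist_card[OF reach] by auto
  have sub: "retired s - freed s \<subseteq> ?U"
    using reach by (rule hp_reach_unfreed_subset)
  show "finite (retired s - freed s) \<and>
        card (retired s - freed s) \<le> N * retire_list_bound N H r"
    using finite_subset[OF sub fin] card_mono[OF fin sub] card_U by simp
qed

end
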